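(* Let $T_1,T_2$ be tables joined on column $J$, $T_1$ having a real-valued column $W$, let $\epsilon_1,\epsilon_2\in(0,1]$ and $p\in[\max\{\epsilon_1,\epsilon_2\},1]$. If $S_1=\mathrm{UBS}_{p,\epsilon_1/p}(T_1,J)$, $S_2=\mathrm{UBS}_{p,\epsilon_2/p}(T_2,J)$ and $\hat J_{\mathrm{sum}}=\frac{p}{\epsilon_1\epsilon_2}\sum_{(t_1,t_2)\in S_1\bowtie_J S_2}t_1.W$, then $$\mathrm{Var}[\hat J_{\mathrm{sum}}]=\Big(\frac1{\epsilon_2}-\frac1p\Big)\beta_1+\Big(\frac1{\epsilon_1}-\frac1p\Big)\beta_2+\Big(\frac{p}{\epsilon_1\epsilon_2}-\frac1{\epsilon_1}-\frac1{\epsilon_2}+\frac1p\Big)\beta_3+\Big(\frac1p-1\Big)\beta_4,$$ where $\beta_1=\sum_v a_v^2\mu_v^2b_v$, $\beta_2=\sum_v a_v(\mu_v^2+\sigma_v^2)b_v^2$, $\beta_3=\sum_v a_v(\mu_v^2+\sigma_v^2)b_v$, $\beta_4=\sum_v a_v^2\mu_v^2b_v^2$.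
   Context: $T_1,T_2$ are finite multisets of tuples with a join attribute $J$ taking values in a finite set $\mathcal U$; $a_v$ (resp. $b_v$) is the number of tuples of $T_1$ (resp. $T_2$) with $J$-value $v$. For each $v$ with $a_v>0$, $\mu_v$ and $\sigma_v^2$ are the mean and (population) variance of the $W$-values of the tuples of $T_1$ with $J$-value $v$; terms with $a_v=0$ contribute $0$. $X\bowtie_J Y$ is the set of pairs $(t_1,t_2)\in X\times Y$ with $t_1.J=t_2.J$. $\mathrm{UBS}_{p,q}(T,J)$: given a hash function $h:\mathcal U\to[0,1]$, each tuple $t\in T$ with $h(t.J)<p$ is included independently with probability $q$; others are excluded. The values $h(v)$ are independent uniform on $[0,1]$, the same $h$ is used for both tables, and the Bernoulli coins are independent across all tuples and independent of $h$. *)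

theory Defs
  imports "HOL-Probability.Probability"
begin

text \<open>Tables are modelled as finite sets of tuple identifiers (so multisets of
tuples are allowed); the join attribute J is a function from identifiers to
the finite value domain U, and W a real-valued function on T1's identifiers.\<close>

text \<open>Outcome of the randomness: hash values h (one per join value) and one
Bernoulli coin per tuple of T1 and of T2.\<close>

definition ubs_space ::
  "'u set \<Rightarrow> 'i set \<Rightarrow> 'k set \<Rightarrow> real \<Rightarrow> real
   \<Rightarrow> ((('u \<Rightarrow> real) \<times> ('i \<Rightarrow> bool)) \<times> ('k \<Rightarrow> bool)) measure" where
  "ubs_space U T1 T2 q1 q2 =
     ((PiM U (\<lambda>_. uniform_measure lborel {0..1::real}))
       \<Otimes>\<^sub>M (PiM T1 (\<lambda>_. measure_pmf (bernoulli_pmf q1))))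
       \<Otimes>\<^sub>M (PiM T2 (\<lambda>_. measure_pmf (bernoulli_pmf q2)))"

definition ubs_sample ::
  "real \<Rightarrow> ('u \<Rightarrow> real) \<Rightarrow> ('i \<Rightarrow> bool) \<Rightarrow> ('i \<Rightarrow> 'u) \<Rightarrow> 'i set \<Rightarrow> 'i set" where
  "ubs_sample p h c J T = {t \<in> T. h (J t) < p \<and> c t}"

definition join_on :: "('i \<Rightarrow> 'u) \<Rightarrow> ('k \<Rightarrow> 'u) \<Rightarrow> 'i set \<Rightarrow> 'k set \<Rightarrow> ('i \<times> 'k) set" where
  "join_on J1 J2 X Y = {(t1, t2) \<in> X \<times> Y. J1 t1 = J2 t2}"

definition J_sum_est ::
  "real \<Rightarrow> real \<Rightarrow> real \<Rightarrow> ('i \<Rightarrow> 'u) \<Rightarrow> ('k \<Rightarrow> 'u) \<Rightarrow> ('i \<Rightarrow> real) \<Rightarrow> 'i set \<Rightarrow> 'k set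
   \<Rightarrow> (('u \<Rightarrow> real) \<times> ('i \<Rightarrow> bool)) \<times> ('k \<Rightarrow> bool) \<Rightarrow> real" where
  "J_sum_est p e1 e2 J1 J2 W T1 T2 \<omega> =
     (let h = fst (fst \<omega>); c1 = snd (fst \<omega>); c2 = snd \<omega>;
          S1 = ubs_sample p h c1 J1 T1; S2 = ubs_sample p h c2 J2 T2
      in p / (e1 * e2) * (\<Sum>(t1, t2) \<in> join_on J1 J2 S1 S2. W t1))"

definition cnt :: "('i \<Rightarrow> 'u) \<Rightarrow> 'i set \<Rightarrow> 'u \<Rightarrow> nat" where
  "cnt J T v = card {t \<in> T. J t = v}"

definition grp_mean :: "('i \<Rightarrow> 'u) \<Rightarrow> ('i \<Rightarrow> real) \<Rightarrow> 'i set \<Rightarrow> 'u \<Rightarrow> real" where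
  "grp_mean J W T v = (\<Sum>t \<in> {t \<in> T. J t = v}. W t) / real (cnt J T v)"

definition grp_var :: "('i \<Rightarrow> 'u) \<Rightarrow> ('i \<Rightarrow> real) \<Rightarrow> 'i set \<Rightarrow> 'u \<Rightarrow> real" where
  "grp_var J W T v =
     (\<Sum>t \<in> {t \<in> T. J t = v}. (W t - grp_mean J W T v)\<^sup>2) / real (cnt J T v)"

definition beta1 where
  "beta1 U J1 J2 W T1 T2 = (\<Sum>v\<in>U. if cnt J1 T1 v = 0 then 0 else
     real (cnt J1 T1 v)^2 * (grp_mean J1 W T1 v)\<^sup>2 * real (cnt J2 T2 v))"
definition beta2 where
  "beta2 U J1 J2 W T1 T2 = (\<Sum>v\<in>U. if cnt J1 T1 v = 0 then 0 else
     real (cnt J1 T1 v) * ((grp_mean J1 W T1 v)\<^sup>2 + grp_var J1 W T1 v) * real (cnt J2 T2 v)^2)"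
definition beta3 where
  "beta3 U J1 J2 W T1 T2 = (\<Sum>v\<in>U. if cnt J1 T1 v = 0 then 0 else
     real (cnt J1 T1 v) * ((grp_mean J1 W T1 v)\<^sup>2 + grp_var J1 W T1 v) * real (cnt J2 T2 v))"
definition beta4 where
  "beta4 U J1 J2 W T1 T2 = (\<Sum>v\<in>U. if cnt J1 T1 v = 0 then 0 else
     real (cnt J1 T1 v)^2 * (grp_mean J1 W T1 v)\<^sup>2 * real (cnt J2 T2 v)^2)"

end

theory Submission
  imports Defs
begin

text \<open>Split the join by join value v. The value v contributes
  Y_v = [h v < p] * A_v * B_v, where A_v is the coin-weighted W-sum over the T1-tuples with
  value v and B_v the number of T2-tuples with value v whose coin shows heads. The three factors
  depend on independent coordinates of the sample space, so all moments of Y_v factorise. For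
  v \<noteq> v' the hash indicators are independent and the coin sums range over disjoint groups, hence
  the Y_v are uncorrelated and the variance is the sum over v of p E[A_v^2] E[B_v^2] -
  (p E[A_v] E[B_v])^2. Inserting E[A_v^2] = q^2 (sum W)^2 + (q - q^2) (sum W^2), and likewise
  for B_v, with q = \<epsilon>/p produces the four \<beta>-terms.\<close>

subsection \<open>Moments on product spaces\<close>

lemma integral_pair_measure_mult:
  fixes f :: "'a \<Rightarrow> real" and g :: "'b \<Rightarrow> real"
  assumes "prob_space M1" "prob_space M2"
    and [measurable]: "f \<in> borel_measurable M1" "g \<in> borel_measurable M2"
    and f_bound: "\<And>x. \<bar>f x\<bar> \<le> B" and g_bound: "\<And>y. \<bar>g y\<bar> \<le> C"
  shows "integrable (M1 \<Otimes>\<^sub>M M2) (\<lambda>z. f (fst z) * g (snd z))"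
    and "(\<integral>z. f (fst z) * g (snd z) \<partial>(M1 \<Otimes>\<^sub>M M2)) = integral\<^sup>L M1 f * integral\<^sup>L M2 g"
proof -
  interpret M1: prob_space M1 by fact
  interpret M2: prob_space M2 by fact
  interpret pair_prob_space M1 M2 ..
  show int: "integrable (M1 \<Otimes>\<^sub>M M2) (\<lambda>z. f (fst z) * g (snd z))"
  proof (rule integrable_const_bound[where B = "B * C"])
    show "AE z in M1 \<Otimes>\<^sub>M M2. norm (f (fst z) * g (snd z)) \<le> B * C"
      using f_bound g_bound by (intro AE_I2) (auto simp: abs_mult intro!: mult_mono')
  qed measurable
  show "(\<integral>z. f (fst z) * g (snd z) \<partial>(M1 \<Otimes>\<^sub>M M2)) = integral\<^sup>L M1 f * integral\<^sup>L M2 g"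
    using integral_fst'[OF int] by simp
qed

lemma integral_pair_pair_measure_mult:
  fixes f :: "'a \<Rightarrow> real" and g :: "'b \<Rightarrow> real" and k :: "'c \<Rightarrow> real"
  assumes "prob_space M1" "prob_space M2" "prob_space M3"
    and [measurable]: "f \<in> borel_measurable M1" "g \<in> borel_measurable M2" "k \<in> borel_measurable M3"
    and f_bound: "\<And>x. \<bar>f x\<bar> \<le> Bf" and g_bound: "\<And>y. \<bar>g y\<bar> \<le> Bg"
    and k_bound: "\<And>z. \<bar>k z\<bar> \<le> Bk"
  shows "integrable ((M1 \<Otimes>\<^sub>M M2) \<Otimes>\<^sub>M M3) (\<lambda>x. f (fst (fst x)) * g (snd (fst x)) * k (snd x))"
    and "(\<integral>x. f (fst (fst x)) * g (snd (fst x)) * k (snd x) \<partial>((M1 \<Otimes>\<^sub>M M2) \<Otimes>\<^sub>M M3))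
           = integral\<^sup>L M1 f * integral\<^sup>L M2 g * integral\<^sup>L M3 k"
proof -
  have fg_bound: "\<bar>f (fst y) * g (snd y)\<bar> \<le> Bf * Bg" for y
    using f_bound g_bound by (auto simp: abs_mult intro!: mult_mono')
  note fg = integral_pair_measure_mult[OF prob_space_pair[OF assms(1,2)] assms(3),
      where f = "\<lambda>y. f (fst y) * g (snd y)", OF _ assms(6) fg_bound k_bound]
  show "integrable ((M1 \<Otimes>\<^sub>M M2) \<Otimes>\<^sub>M M3) (\<lambda>x. f (fst (fst x)) * g (snd (fst x)) * k (snd x))"
    using fg(1) by simp
  show "(\<integral>x. f (fst (fst x)) * g (snd (fst x)) * k (snd x) \<partial>((M1 \<Otimes>\<^sub>M M2) \<Otimes>\<^sub>M M3))
           = integral\<^sup>L M1 f * integral\<^sup>L M2 g * integral\<^sup>L M3 k"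
    using fg(2) integral_pair_measure_mult(2)[OF assms(1,2,4,5) f_bound g_bound] by simp
qed

lemma (in product_prob_space) integral_PiM_component:
  fixes f :: "'a \<Rightarrow> real"
  assumes "finite I" "i \<in> I" "integrable (M i) f"
  shows "(\<integral>x. f (x i) \<partial>Pi\<^sub>M I M) = integral\<^sup>L (M i) f"
proof -
  define F where "F k = (if k = i then f else (\<lambda>_. 1))" for k
  have "(\<Prod>k\<in>I. F k (x k)) = f (x i)" for x
    using assms by (simp add: F_def prod.remove[of I i])
  moreover have "(\<Prod>k\<in>I. integral\<^sup>L (M k) (F k)) = integral\<^sup>L (M i) f"
    using assms by (simp add: F_def prod.remove[of I i] M.prob_space)
  ultimately show ?thesis
    using product_integral_prod[of I F] assms by (simp add: F_def)
qed

lemma (in product_prob_space) integral_PiM_two_components: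
  fixes f g :: "'a \<Rightarrow> real"
  assumes "finite I" "i \<in> I" "j \<in> I" "i \<noteq> j" "integrable (M i) f" "integrable (M j) g"
  shows "(\<integral>x. f (x i) * g (x j) \<partial>Pi\<^sub>M I M) = integral\<^sup>L (M i) f * integral\<^sup>L (M j) g"
proof -
  define F where "F k = (if k = i then f else if k = j then g else (\<lambda>_. 1))" for k
  have "(\<Prod>k\<in>I. F k (x k)) = (\<Prod>k\<in>{i, j}. F k (x k))" for x
    using assms by (intro prod.mono_neutral_right) (auto simp: F_def)
  moreover have "(\<Prod>k\<in>I. integral\<^sup>L (M k) (F k)) = (\<Prod>k\<in>{i, j}. integral\<^sup>L (M k) (F k))"
    using assms by (intro prod.mono_neutral_right) (auto simp: F_def M.prob_space)
  ultimately show ?thesis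
    using product_integral_prod[of I F] assms by (simp add: F_def)
qed

lemma (in prob_space) variance_cmult:
  fixes X :: "'a \<Rightarrow> real"
  shows "variance (\<lambda>x. c * X x) = c\<^sup>2 * variance X"
proof -
  have "(c * X x - expectation (\<lambda>x. c * X x))\<^sup>2 = c\<^sup>2 * (X x - expectation X)\<^sup>2" for x
    by (simp add: power2_eq_square algebra_simps)
  then show ?thesis
    by simp
qed

lemma (in prob_space) variance_sum_uncorrelated:
  fixes Y :: "'j \<Rightarrow> 'a \<Rightarrow> real"
  assumes "finite U"
    and integrable: "\<And>v. v \<in> U \<Longrightarrow> integrable M (Y v)"
    and integrable_mult: "\<And>v v'. v \<in> U \<Longrightarrow> v' \<in> U \<Longrightarrow> integrable M (\<lambda>x. Y v x * Y v' x)"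
    and uncorrelated: "\<And>v v'. v \<in> U \<Longrightarrow> v' \<in> U \<Longrightarrow> v \<noteq> v' \<Longrightarrow>
      expectation (\<lambda>x. Y v x * Y v' x) = expectation (Y v) * expectation (Y v')"
  shows "variance (\<lambda>x. \<Sum>v\<in>U. Y v x) = (\<Sum>v\<in>U. variance (Y v))"
proof -
  have sq: "(\<Sum>v\<in>U. Y v x)\<^sup>2 = (\<Sum>v\<in>U. \<Sum>v'\<in>U. Y v x * Y v' x)" for x
    by (simp add: power2_eq_square sum_product)
  have "variance (\<lambda>x. \<Sum>v\<in>U. Y v x)
      = (\<Sum>v\<in>U. \<Sum>v'\<in>U. expectation (\<lambda>x. Y v x * Y v' x) - expectation (Y v) * expectation (Y v'))"
    using integrable integrable_mult
    by (subst variance_eq)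
       (simp_all add: sq integrable_sum Bochner_Integration.integral_sum power2_eq_square sum_product
         sum_subtractf)
  also have "\<dots> = (\<Sum>v\<in>U. expectation (\<lambda>x. (Y v x)\<^sup>2) - (expectation (Y v))\<^sup>2)"
  proof (intro sum.cong refl)
    fix v assume "v \<in> U"
    then have "(\<Sum>v'\<in>U. expectation (\<lambda>x. Y v x * Y v' x) - expectation (Y v) * expectation (Y v'))
        = (\<Sum>v'\<in>U. if v' = v then expectation (\<lambda>x. Y v x * Y v x) - expectation (Y v) * expectation (Y v) else 0)"
      using uncorrelated by (intro sum.cong) auto
    then show "(\<Sum>v'\<in>U. expectation (\<lambda>x. Y v x * Y v' x) - expectation (Y v) * expectation (Y v'))
        = expectation (\<lambda>x. (Y v x)\<^sup>2) - (expectation (Y v))\<^sup>2"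
      using \<open>finite U\<close> \<open>v \<in> U\<close> by (simp add: power2_eq_square)
  qed
  also have "\<dots> = (\<Sum>v\<in>U. variance (Y v))"
    using integrable integrable_mult
    by (intro sum.cong refl, subst variance_eq) (simp_all add: power2_eq_square)
  finally show ?thesis .
qed

subsection \<open>Hash values and coins\<close>

abbreviation uniform01 :: "real measure" where
  "uniform01 \<equiv> uniform_measure lborel {0..1}"

abbreviation hash_space :: "'u set \<Rightarrow> ('u \<Rightarrow> real) measure" where
  "hash_space U \<equiv> Pi\<^sub>M U (\<lambda>_. uniform01)"

abbreviation coin_space :: "'i set \<Rightarrow> real \<Rightarrow> ('i \<Rightarrow> bool) measure" where
  "coin_space T q \<equiv> Pi\<^sub>M T (\<lambda>_. measure_pmf (bernoulli_pmf q))"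

lemma prob_space_uniform01: "prob_space uniform01"
  by (rule prob_space_uniform_measure) auto

lemma integral_uniform01_less:
  assumes "0 \<le> p" "p \<le> 1"
  shows "(\<integral>x. of_bool (x < p) \<partial>uniform01) = p"
proof -
  have "(\<integral>x. of_bool (x < p) \<partial>uniform01) = measure uniform01 ({..<p} \<inter> space uniform01)"
    by (simp flip: indicator_def[of "{..<p}", unfolded mem_Collect_eq lessThan_iff])
  also have "\<dots> = measure lborel ({0..1} \<inter> {..<p}) / measure lborel {0..1::real}"
    by (subst measure_uniform_measure) auto
  also have "{0..1} \<inter> {..<p} = {0..<p}"
    using assms by auto
  finally show ?thesis
    using assms by simp
qed

lemma integral_hash_less:
  assumes "finite U" "v \<in> U" "0 \<le> p" "p \<le> 1"
  shows "(\<integral>h. of_bool (h v < p) \<partial>hash_space U) = p"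
proof -
  interpret product_prob_space "\<lambda>_. uniform01" U
    by (intro product_prob_spaceI prob_space_uniform01)
  have int: "integrable uniform01 (\<lambda>x. of_bool (x < p) :: real)"
    by (rule M.integrable_const_bound[where B = 1]) auto
  show ?thesis
    using integral_PiM_component[OF assms(1,2) int] integral_uniform01_less[OF assms(3,4)] by simp
qed

lemma integral_hash_less_mult:
  assumes "finite U" "v \<in> U" "v' \<in> U" "0 \<le> p" "p \<le> 1"
  shows "(\<integral>h. of_bool (h v < p) * of_bool (h v' < p) \<partial>hash_space U) = (if v = v' then p else p\<^sup>2)"
proof (cases "v = v'")
  case True
  then show ?thesis
    using integral_hash_less[OF assms(1,2,4,5)] by (simp flip: of_bool_conj)
next
  case False
  interpret product_prob_space "\<lambda>_. uniform01" U
    by (intro product_prob_spaceI prob_space_uniform01)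
  have int: "integrable uniform01 (\<lambda>x. of_bool (x < p) :: real)"
    by (rule M.integrable_const_bound[where B = 1]) auto
  show ?thesis
    using integral_PiM_two_components[OF assms(1-3) False int int] integral_uniform01_less[OF assms(4,5)] False
    by (simp add: power2_eq_square)
qed

lemma integral_coin:
  assumes "finite T" "t \<in> T" "0 \<le> q" "q \<le> 1"
  shows "(\<integral>c. of_bool (c t) \<partial>coin_space T q) = q"
proof -
  interpret product_prob_space "\<lambda>_. measure_pmf (bernoulli_pmf q)" T
    by (intro product_prob_spaceI prob_space_measure_pmf)
  have "integrable (bernoulli_pmf q) (\<lambda>b. of_bool b :: real)"
    by (rule integrable_measure_pmf_finite) simp
  then show ?thesis
    using integral_PiM_component[OF assms(1,2)] assms(3,4) by simp
qed

lemma integral_coin_mult: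
  assumes "finite T" "t \<in> T" "t' \<in> T" "0 \<le> q" "q \<le> 1"
  shows "(\<integral>c. of_bool (c t) * of_bool (c t') \<partial>coin_space T q) = (if t = t' then q else q\<^sup>2)"
proof (cases "t = t'")
  case True
  then show ?thesis
    using integral_coin[OF assms(1,2,4,5)] by (simp flip: of_bool_conj)
next
  case False
  interpret product_prob_space "\<lambda>_. measure_pmf (bernoulli_pmf q)" T
    by (intro product_prob_spaceI prob_space_measure_pmf)
  have "integrable (bernoulli_pmf q) (\<lambda>b. of_bool b :: real)"
    by (rule integrable_measure_pmf_finite) simp
  then show ?thesis
    using integral_PiM_two_components[OF assms(1-3) False] assms(4,5) False
    by (simp add: power2_eq_square)
qed

definition coin_sum :: "('i \<Rightarrow> real) \<Rightarrow> 'i set \<Rightarrow> ('i \<Rightarrow> bool) \<Rightarrow> real" where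
  "coin_sum w G c = (\<Sum>t\<in>G. w t * of_bool (c t))"

lemma coin_sum_measurable [measurable]:
  "G \<subseteq> T \<Longrightarrow> coin_sum w G \<in> borel_measurable (coin_space T q)"
  unfolding coin_sum_def by measurable auto

lemma coin_sum_eq_sum_filter:
  assumes "finite G"
  shows "coin_sum w G c = sum w {t \<in> G. c t}"
  unfolding coin_sum_def sum.inter_filter[OF assms] by (intro sum.cong) auto

lemma abs_coin_sum_le:
  assumes "finite T" "G \<subseteq> T"
  shows "\<bar>coin_sum w G c\<bar> \<le> (\<Sum>t\<in>T. \<bar>w t\<bar>)"
proof -
  have "\<bar>coin_sum w G c\<bar> \<le> (\<Sum>t\<in>G. \<bar>w t\<bar>)"
    unfolding coin_sum_def by (rule order_trans[OF sum_abs]) (intro sum_mono, simp add: abs_mult)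
  also have "\<dots> \<le> (\<Sum>t\<in>T. \<bar>w t\<bar>)"
    using assms by (intro sum_mono2) auto
  finally show ?thesis .
qed

lemma abs_coin_sum_mult_le:
  assumes "finite T" "G \<subseteq> T" "G' \<subseteq> T"
  shows "\<bar>coin_sum w G c * coin_sum w G' c\<bar> \<le> (\<Sum>t\<in>T. \<bar>w t\<bar>)\<^sup>2"
  using abs_coin_sum_le[OF assms(1,2)] abs_coin_sum_le[OF assms(1,3)]
  by (simp add: abs_mult power2_eq_square mult_mono')

lemma integrable_coin_space:
  fixes f :: "('i \<Rightarrow> bool) \<Rightarrow> real"
  assumes [measurable]: "f \<in> borel_measurable (coin_space T q)"
    and "\<And>c. \<bar>f c\<bar> \<le> B"
  shows "integrable (coin_space T q) f"
proof -
  interpret prob_space "coin_space T q"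
    by (intro prob_space_PiM prob_space_measure_pmf)
  show ?thesis
    by (rule integrable_const_bound[where B = B]) (use assms(2) in auto)
qed

lemma integrable_coin:
  fixes w :: real
  assumes "t \<in> T"
  shows "integrable (coin_space T q) (\<lambda>c. w * of_bool (c t))"
    and "t' \<in> T \<Longrightarrow> integrable (coin_space T q) (\<lambda>c. w * (of_bool (c t) * of_bool (c t')))"
  using assms by (intro integrable_coin_space[where B = "\<bar>w\<bar>"]; measurable; simp add: abs_mult)+

lemma integral_coin_sum:
  assumes "finite T" "G \<subseteq> T" "0 \<le> q" "q \<le> 1"
  shows "(\<integral>c. coin_sum w G c \<partial>coin_space T q) = q * sum w G"
proof -
  have "integrable (coin_space T q) (\<lambda>c. w t * of_bool (c t))" if "t \<in> G" for t
    using that assms by (intro integrable_coin(1)) auto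
  then have "(\<integral>c. coin_sum w G c \<partial>coin_space T q) = (\<Sum>t\<in>G. w t * (\<integral>c. of_bool (c t) \<partial>coin_space T q))"
    unfolding coin_sum_def by (simp add: Bochner_Integration.integral_sum)
  also have "\<dots> = q * sum w G"
    using assms by (simp add: integral_coin subsetD sum_distrib_left mult.commute)
  finally show ?thesis .
qed

lemma integral_coin_sum_mult:
  assumes "finite T" "G \<subseteq> T" "G' \<subseteq> T" "0 \<le> q" "q \<le> 1"
  shows "(\<integral>c. coin_sum w G c * coin_sum w G' c \<partial>coin_space T q)
           = q\<^sup>2 * sum w G * sum w G' + (q - q\<^sup>2) * (\<Sum>t\<in>G \<inter> G'. (w t)\<^sup>2)"
proof -
  have fin: "finite G" "finite G'"
    using assms finite_subset by auto
  have "integrable (coin_space T q) (\<lambda>c. w t * w t' * (of_bool (c t) * of_bool (c t')))"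
    if "t \<in> G" "t' \<in> G'" for t t'
    using that assms by (intro integrable_coin(2)) auto
  then have "(\<integral>c. coin_sum w G c * coin_sum w G' c \<partial>coin_space T q)
      = (\<Sum>t\<in>G. \<Sum>t'\<in>G'. w t * w t' * (\<integral>c. of_bool (c t) * of_bool (c t') \<partial>coin_space T q))"
    unfolding coin_sum_def sum_product
    by (simp add: Bochner_Integration.integral_sum integrable_sum mult_ac)
  also have "\<dots> = (\<Sum>t\<in>G. \<Sum>t'\<in>G'. q\<^sup>2 * (w t * w t') + (if t = t' then (q - q\<^sup>2) * (w t)\<^sup>2 else 0))"
    using assms by (intro sum.cong refl) (auto simp: integral_coin_mult subsetD power2_eq_square algebra_simps)
  also have "\<dots> = q\<^sup>2 * (\<Sum>t\<in>G. \<Sum>t'\<in>G'. w t * w t') + (\<Sum>t\<in>G. if t \<in> G' then (q - q\<^sup>2) * (w t)\<^sup>2 else 0)"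
    using fin by (simp add: sum.distrib sum_distrib_left)
  also have "\<dots> = q\<^sup>2 * sum w G * sum w G' + (q - q\<^sup>2) * (\<Sum>t\<in>G \<inter> G'. (w t)\<^sup>2)"
  proof -
    have "(\<Sum>t\<in>G. \<Sum>t'\<in>G'. w t * w t') = sum w G * sum w G'"
      by (simp add: sum_product)
    moreover have "(\<Sum>t\<in>G. if t \<in> G' then (q - q\<^sup>2) * (w t)\<^sup>2 else 0) = (q - q\<^sup>2) * (\<Sum>t\<in>G \<inter> G'. (w t)\<^sup>2)"
      using fin by (auto simp: sum.inter_restrict sum_distrib_left intro!: sum.cong)
    ultimately show ?thesis
      by simp
  qed
  finally show ?thesis .
qed

subsection \<open>Decomposition of the estimator by join value\<close>

locale ubs_join =
  fixes U :: "'u set" and T1 :: "'i set" and T2 :: "'k set"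
    and J1 :: "'i \<Rightarrow> 'u" and J2 :: "'k \<Rightarrow> 'u" and W :: "'i \<Rightarrow> real"
    and p q1 q2 :: real
  assumes finite_U: "finite U" and finite_T1: "finite T1" and finite_T2: "finite T2"
    and J1_into: "J1 ` T1 \<subseteq> U"
    and p: "0 \<le> p" "p \<le> 1" and q1: "0 \<le> q1" "q1 \<le> 1" and q2: "0 \<le> q2" "q2 \<le> 1"
begin

sublocale prob_space "ubs_space U T1 T2 q1 q2"
  unfolding ubs_space_def
  by (intro prob_space_pair prob_space_PiM prob_space_uniform01 prob_space_measure_pmf)

abbreviation group1 :: "'u \<Rightarrow> 'i set" where
  "group1 v \<equiv> {t \<in> T1. J1 t = v}"

abbreviation group2 :: "'u \<Rightarrow> 'k set" where
  "group2 v \<equiv> {t \<in> T2. J2 t = v}"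

definition group_term :: "'u \<Rightarrow> (('u \<Rightarrow> real) \<times> ('i \<Rightarrow> bool)) \<times> ('k \<Rightarrow> bool) \<Rightarrow> real" where
  "group_term v \<omega> = of_bool (fst (fst \<omega>) v < p)
     * coin_sum W (group1 v) (snd (fst \<omega>)) * coin_sum (\<lambda>_. 1) (group2 v) (snd \<omega>)"

lemma join_sum_eq_sum_group_term:
  "(\<Sum>(t1, t2) \<in> join_on J1 J2 (ubs_sample p h c1 J1 T1) (ubs_sample p h c2 J2 T2). W t1)
     = (\<Sum>v\<in>U. group_term v ((h, c1), c2))"
proof -
  define A where "A v = {t \<in> group1 v. h v < p \<and> c1 t}" for v
  define B where "B v = {t \<in> group2 v. h v < p \<and> c2 t}" for v
  have fin: "finite (A v)" "finite (B v)" for v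
    using finite_T1 finite_T2 by (simp_all add: A_def B_def)
  have "join_on J1 J2 (ubs_sample p h c1 J1 T1) (ubs_sample p h c2 J2 T2) = (\<Union>v\<in>U. A v \<times> B v)"
    using J1_into by (auto simp: join_on_def ubs_sample_def A_def B_def)
  then have "(\<Sum>(t1, t2) \<in> join_on J1 J2 (ubs_sample p h c1 J1 T1) (ubs_sample p h c2 J2 T2). W t1)
      = (\<Sum>v\<in>U. \<Sum>(t1, t2) \<in> A v \<times> B v. W t1)"
    using finite_U fin by (simp only:) (rule sum.UNION_disjoint; auto simp: A_def B_def)
  also have "\<dots> = (\<Sum>v\<in>U. sum W (A v) * real (card (B v)))"
    by (simp add: sum.cartesian_product[symmetric] sum_distrib_right mult.commute)
  also have "\<dots> = (\<Sum>v\<in>U. group_term v ((h, c1), c2))"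
    using finite_T1 finite_T2
    by (intro sum.cong refl) (simp add: group_term_def coin_sum_eq_sum_filter A_def B_def)
  finally show ?thesis .
qed

lemma
  fixes f :: "('u \<Rightarrow> real) \<Rightarrow> real" and g :: "('i \<Rightarrow> bool) \<Rightarrow> real" and k :: "('k \<Rightarrow> bool) \<Rightarrow> real"
  assumes "f \<in> borel_measurable (hash_space U)" "g \<in> borel_measurable (coin_space T1 q1)"
    "k \<in> borel_measurable (coin_space T2 q2)"
    and "\<And>h. \<bar>f h\<bar> \<le> Bf" "\<And>c. \<bar>g c\<bar> \<le> Bg" "\<And>c. \<bar>k c\<bar> \<le> Bk"
  shows integrable_ubs_space_factors:
      "integrable (ubs_space U T1 T2 q1 q2) (\<lambda>\<omega>. f (fst (fst \<omega>)) * g (snd (fst \<omega>)) * k (snd \<omega>))"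
    and integral_ubs_space_factors:
      "expectation (\<lambda>\<omega>. f (fst (fst \<omega>)) * g (snd (fst \<omega>)) * k (snd \<omega>))
         = integral\<^sup>L (hash_space U) f * integral\<^sup>L (coin_space T1 q1) g * integral\<^sup>L (coin_space T2 q2) k"
  using integral_pair_pair_measure_mult[OF prob_space_PiM prob_space_PiM prob_space_PiM assms,
      OF prob_space_uniform01 prob_space_measure_pmf prob_space_measure_pmf]
  by (simp_all add: ubs_space_def)

lemma
  assumes "v \<in> U"
  shows integrable_group_term: "integrable (ubs_space U T1 T2 q1 q2) (group_term v)"
    and integral_group_term:
      "expectation (group_term v) = p * (q1 * sum W (group1 v)) * (q2 * real (cnt J2 T2 v))"
proof -
  have eq: "group_term v = (\<lambda>\<omega>. of_bool (fst (fst \<omega>) v < p)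
      * coin_sum W (group1 v) (snd (fst \<omega>)) * coin_sum (\<lambda>_. 1) (group2 v) (snd \<omega>))"
    by (simp add: group_term_def fun_eq_iff)
  have "(\<lambda>h. of_bool (h v < p) :: real) \<in> borel_measurable (hash_space U)"
    using assms by measurable
  note factors = integrable_ubs_space_factors[OF this coin_sum_measurable coin_sum_measurable _
      abs_coin_sum_le[OF finite_T1] abs_coin_sum_le[OF finite_T2], where Bf = 1]
    integral_ubs_space_factors[OF this coin_sum_measurable coin_sum_measurable _
      abs_coin_sum_le[OF finite_T1] abs_coin_sum_le[OF finite_T2], where Bf = 1]
  show "integrable (ubs_space U T1 T2 q1 q2) (group_term v)"
    unfolding eq by (rule factors) auto
  show "expectation (group_term v) = p * (q1 * sum W (group1 v)) * (q2 * real (cnt J2 T2 v))"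
    unfolding eq using finite_T1 finite_T2 finite_U assms p q1 q2
    by (subst factors) (auto simp: integral_hash_less integral_coin_sum cnt_def)
qed

lemma
  assumes "v \<in> U" "v' \<in> U"
  shows integrable_group_term_mult:
      "integrable (ubs_space U T1 T2 q1 q2) (\<lambda>\<omega>. group_term v \<omega> * group_term v' \<omega>)"
    and integral_group_term_mult:
      "expectation (\<lambda>\<omega>. group_term v \<omega> * group_term v' \<omega>)
         = (if v = v' then p else p\<^sup>2)
           * (q1\<^sup>2 * sum W (group1 v) * sum W (group1 v')
              + (q1 - q1\<^sup>2) * (\<Sum>t\<in>group1 v \<inter> group1 v'. (W t)\<^sup>2))
           * (q2\<^sup>2 * real (cnt J2 T2 v) * real (cnt J2 T2 v')
              + (q2 - q2\<^sup>2) * real (card (group2 v \<inter> group2 v')))"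
    (is "_ = ?thesis_rhs")
proof -
  have eq: "(\<lambda>\<omega>. group_term v \<omega> * group_term v' \<omega>) = (\<lambda>\<omega>.
      (of_bool (fst (fst \<omega>) v < p) * of_bool (fst (fst \<omega>) v' < p))
      * (coin_sum W (group1 v) (snd (fst \<omega>)) * coin_sum W (group1 v') (snd (fst \<omega>)))
      * (coin_sum (\<lambda>_. 1) (group2 v) (snd \<omega>) * coin_sum (\<lambda>_. 1) (group2 v') (snd \<omega>)))"
    by (simp add: group_term_def fun_eq_iff mult_ac)
  have "(\<lambda>h. of_bool (h v < p) * of_bool (h v' < p) :: real) \<in> borel_measurable (hash_space U)"
    using assms by measurable
  note factors = integrable_ubs_space_factors[OF this
      borel_measurable_times[OF coin_sum_measurable coin_sum_measurable]
      borel_measurable_times[OF coin_sum_measurable coin_sum_measurable] _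
      abs_coin_sum_mult_le[OF finite_T1] abs_coin_sum_mult_le[OF finite_T2], where Bf = 1]
    integral_ubs_space_factors[OF this
      borel_measurable_times[OF coin_sum_measurable coin_sum_measurable]
      borel_measurable_times[OF coin_sum_measurable coin_sum_measurable] _
      abs_coin_sum_mult_le[OF finite_T1] abs_coin_sum_mult_le[OF finite_T2], where Bf = 1]
  show "integrable (ubs_space U T1 T2 q1 q2) (\<lambda>\<omega>. group_term v \<omega> * group_term v' \<omega>)"
    unfolding eq by (rule factors) auto
  show "expectation (\<lambda>\<omega>. group_term v \<omega> * group_term v' \<omega>) = ?thesis_rhs"
    unfolding eq using finite_T1 finite_T2 finite_U assms p q1 q2
    by (subst factors) (auto simp: integral_hash_less_mult integral_coin_sum_mult cnt_def)
qed

lemma group_terms_uncorrelated: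
  assumes "v \<in> U" "v' \<in> U" "v \<noteq> v'"
  shows "expectation (\<lambda>\<omega>. group_term v \<omega> * group_term v' \<omega>)
           = expectation (group_term v) * expectation (group_term v')"
proof -
  have "group1 v \<inter> group1 v' = {}" "group2 v \<inter> group2 v' = {}"
    using assms(3) by auto
  then show ?thesis
    using assms by (simp add: integral_group_term_mult integral_group_term power2_eq_square mult_ac)
qed

lemma variance_group_term:
  assumes "v \<in> U"
  shows "variance (group_term v)
           = p * (q1\<^sup>2 * (sum W (group1 v))\<^sup>2 + (q1 - q1\<^sup>2) * (\<Sum>t\<in>group1 v. (W t)\<^sup>2))
               * (q2\<^sup>2 * (real (cnt J2 T2 v))\<^sup>2 + (q2 - q2\<^sup>2) * real (cnt J2 T2 v))
             - (p * q1 * sum W (group1 v) * q2 * real (cnt J2 T2 v))\<^sup>2"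
  using assms integrable_group_term[OF assms] integrable_group_term_mult[OF assms assms]
  by (subst variance_eq)
     (simp_all add: integral_group_term_mult integral_group_term cnt_def power2_eq_square mult_ac)

lemma variance_sum_group_term:
  "variance (\<lambda>\<omega>. \<Sum>v\<in>U. group_term v \<omega>) = (\<Sum>v\<in>U. variance (group_term v))"
  using finite_U integrable_group_term integrable_group_term_mult group_terms_uncorrelated
  by (rule variance_sum_uncorrelated)

end

lemma sum_power2_diff_mean:
  fixes W :: "'i \<Rightarrow> real"
  assumes "finite G" "G \<noteq> {}"
  shows "(\<Sum>t\<in>G. (W t - sum W G / card G)\<^sup>2) = (\<Sum>t\<in>G. (W t)\<^sup>2) - (sum W G)\<^sup>2 / card G"
proof -
  define \<mu> where "\<mu> = sum W G / card G"
  have "card G > 0"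
    using assms by (simp add: card_gt_0_iff)
  have "(\<Sum>t\<in>G. (W t - \<mu>)\<^sup>2) = (\<Sum>t\<in>G. (W t)\<^sup>2) - 2 * \<mu> * sum W G + card G * \<mu>\<^sup>2"
    by (simp add: power2_diff sum.distrib sum_subtractf flip: sum_distrib_left sum_distrib_right)
  also have "\<dots> = (\<Sum>t\<in>G. (W t)\<^sup>2) - (sum W G)\<^sup>2 / card G"
    using \<open>card G > 0\<close> by (simp add: \<mu>_def field_simps power2_eq_square)
  finally show ?thesis
    unfolding \<mu>_def .
qed

lemma group_count_mean_sq:
  assumes "finite T"
  shows "(if cnt J T v = 0 then 0 else (real (cnt J T v))\<^sup>2 * (grp_mean J W T v)\<^sup>2)
           = (sum W {t \<in> T. J t = v})\<^sup>2"
proof (cases "{t \<in> T. J t = v} = {}")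
  case True
  then show ?thesis
    unfolding cnt_def True by simp
next
  case False
  then have "cnt J T v > 0"
    using assms by (simp add: cnt_def card_gt_0_iff)
  then show ?thesis
    by (simp add: cnt_def grp_mean_def power_divide)
qed

lemma group_count_second_moment:
  assumes "finite T"
  shows "(if cnt J T v = 0 then 0 else real (cnt J T v) * ((grp_mean J W T v)\<^sup>2 + grp_var J W T v))
           = (\<Sum>t\<in>{t \<in> T. J t = v}. (W t)\<^sup>2)"
proof (cases "{t \<in> T. J t = v} = {}")
  case True
  then show ?thesis
    unfolding cnt_def True by simp
next
  case False
  then have "cnt J T v > 0"
    using assms by (simp add: cnt_def card_gt_0_iff)
  moreover have "grp_var J W T v
      = ((\<Sum>t\<in>{t \<in> T. J t = v}. (W t)\<^sup>2) - (sum W {t \<in> T. J t = v})\<^sup>2 / cnt J T v) / cnt J T v"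
    using sum_power2_diff_mean[of "{t \<in> T. J t = v}" W] assms False
    by (simp add: grp_var_def grp_mean_def cnt_def)
  ultimately show ?thesis
    by (simp add: grp_mean_def cnt_def field_simps power2_eq_square)
qed

lemma beta_sums:
  assumes "finite T1"
  shows "beta1 U J1 J2 W T1 T2 = (\<Sum>v\<in>U. (sum W {t \<in> T1. J1 t = v})\<^sup>2 * real (cnt J2 T2 v))"
    and "beta2 U J1 J2 W T1 T2 = (\<Sum>v\<in>U. (\<Sum>t\<in>{t \<in> T1. J1 t = v}. (W t)\<^sup>2) * (real (cnt J2 T2 v))\<^sup>2)"
    and "beta3 U J1 J2 W T1 T2 = (\<Sum>v\<in>U. (\<Sum>t\<in>{t \<in> T1. J1 t = v}. (W t)\<^sup>2) * real (cnt J2 T2 v))"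
    and "beta4 U J1 J2 W T1 T2 = (\<Sum>v\<in>U. (sum W {t \<in> T1. J1 t = v})\<^sup>2 * (real (cnt J2 T2 v))\<^sup>2)"
proof -
  have [simp]: "(if c then 0 else a) * x = (if c then 0 else a * x)" for c and a x :: real
    by simp
  show "beta1 U J1 J2 W T1 T2 = (\<Sum>v\<in>U. (sum W {t \<in> T1. J1 t = v})\<^sup>2 * real (cnt J2 T2 v))"
    and "beta2 U J1 J2 W T1 T2 = (\<Sum>v\<in>U. (\<Sum>t\<in>{t \<in> T1. J1 t = v}. (W t)\<^sup>2) * (real (cnt J2 T2 v))\<^sup>2)"
    and "beta3 U J1 J2 W T1 T2 = (\<Sum>v\<in>U. (\<Sum>t\<in>{t \<in> T1. J1 t = v}. (W t)\<^sup>2) * real (cnt J2 T2 v))"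
    and "beta4 U J1 J2 W T1 T2 = (\<Sum>v\<in>U. (sum W {t \<in> T1. J1 t = v})\<^sup>2 * (real (cnt J2 T2 v))\<^sup>2)"
    unfolding beta1_def beta2_def beta3_def beta4_def
    by (simp_all add: group_count_mean_sq[OF assms, symmetric] group_count_second_moment[OF assms, symmetric])
qed

lemma ubs_variance_coefficients:
  fixes p e1 e2 s m b :: real
  assumes "0 < p" "0 < e1" "0 < e2"
  shows "(p / (e1 * e2))\<^sup>2
           * (p * ((e1 / p)\<^sup>2 * s\<^sup>2 + (e1 / p - (e1 / p)\<^sup>2) * m) * ((e2 / p)\<^sup>2 * b\<^sup>2 + (e2 / p - (e2 / p)\<^sup>2) * b)
              - (p * (e1 / p) * s * (e2 / p) * b)\<^sup>2)
         = (1 / e2 - 1 / p) * (s\<^sup>2 * b) + (1 / e1 - 1 / p) * (m * b\<^sup>2)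
           + (p / (e1 * e2) - 1 / e1 - 1 / e2 + 1 / p) * (m * b) + (1 / p - 1) * (s\<^sup>2 * b\<^sup>2)"
  using assms by (simp add: field_simps power2_eq_square)

theorem theorem7:
  fixes U :: "'u set" and T1 :: "'i set" and T2 :: "'k set"
    and J1 :: "'i \<Rightarrow> 'u" and J2 :: "'k \<Rightarrow> 'u" and W :: "'i \<Rightarrow> real"
    and e1 e2 p :: real
  assumes "finite U" and "finite T1" and "finite T2"
    and "J1 ` T1 \<subseteq> U" and "J2 ` T2 \<subseteq> U"
    and "0 < e1" "e1 \<le> 1" "0 < e2" "e2 \<le> 1"
    and "max e1 e2 \<le> p" "p \<le> 1"
  shows "prob_space.variance (ubs_space U T1 T2 (e1 / p) (e2 / p))
           (J_sum_est p e1 e2 J1 J2 W T1 T2)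
         = (1 / e2 - 1 / p) * beta1 U J1 J2 W T1 T2
         + (1 / e1 - 1 / p) * beta2 U J1 J2 W T1 T2
         + (p / (e1 * e2) - 1 / e1 - 1 / e2 + 1 / p) * beta3 U J1 J2 W T1 T2
         + (1 / p - 1) * beta4 U J1 J2 W T1 T2"
proof -
  have "0 < p"
    using assms by auto
  interpret ubs_join U T1 T2 J1 J2 W p "e1 / p" "e2 / p"
    using assms \<open>0 < p\<close> by unfold_locales auto
  have "J_sum_est p e1 e2 J1 J2 W T1 T2 = (\<lambda>\<omega>. p / (e1 * e2) * (\<Sum>v\<in>U. group_term v \<omega>))"
    by (simp add: fun_eq_iff J_sum_est_def join_sum_eq_sum_group_term)
  then have variance_est:
    "variance (J_sum_est p e1 e2 J1 J2 W T1 T2) = (p / (e1 * e2))\<^sup>2 * (\<Sum>v\<in>U. variance (group_term v))"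
    by (simp only: variance_cmult variance_sum_group_term)
  show ?thesis
    unfolding variance_est beta_sums[OF \<open>finite T1\<close>] sum_distrib_left sum.distrib[symmetric]
    by (intro sum.cong refl, simp only: variance_group_term, rule ubs_variance_coefficients)
       (use assms \<open>0 < p\<close> in auto)
qed

end
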